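(* Let $H\ge2$ be an integer, $E_\infty=2\sqrt{\frac{H-1}{H}}$, and for $u\le -E_\infty$ let \[ I(u)=-\frac{u}{E_\infty^2}\sqrt{u^2-E_\infty^2}-\log\!\left(-u+\sqrt{u^2-E_\infty^2}\right)+\log E_\infty . \] For each integer $k\ge0$ define $\Theta_{k,H}:\mathbb{R}\to\mathbb{R}$ by \[ \Theta_{k,H}(u)=\begin{cases}\frac12\log(H-1)-\frac{(H-2)u^2}{4(H-1)}-(k+1)I(u), & u\le -E_\infty,\\[2pt] \frac12\log(H-1)-\frac{H-2}{4(H-1)}, & u\ge -E_\infty.\end{cases} \] Then for all integers $k>0$ and all $u<-E_\infty$, $\Theta_{k,H}(u)<\Theta_{0,H}(u)$.
   Context: These functions describe the logarithmic asymptotics (normalized by $\Lambda$) of the mean number of critical values of index $k$ below level $\Lambda u$ of the $H$-spin spherical spin-glass Hamiltonian; the claim itself is a statement purely about the explicitly defined functions above. *)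

theory Defs
  imports Complex_Main
begin

definition E_inf :: "nat \<Rightarrow> real" where
  "E_inf H = 2 * sqrt ((real H - 1) / real H)"

definition I_fun :: "nat \<Rightarrow> real \<Rightarrow> real" where
  "I_fun H u = - (u / (E_inf H)^2) * sqrt (u^2 - (E_inf H)^2)
      - ln (- u + sqrt (u^2 - (E_inf H)^2)) + ln (E_inf H)"

definition Theta :: "nat \<Rightarrow> nat \<Rightarrow> real \<Rightarrow> real" where
  "Theta k H u = (if u \<le> - E_inf H
     then 1/2 * ln (real H - 1) - (real H - 2) * u^2 / (4 * (real H - 1)) - (real k + 1) * I_fun H u
     else 1/2 * ln (real H - 1) - (real H - 2) / (4 * (real H - 1)))"

end

theory Submission
  imports Defs
begin

text \<open>With \<open>a = -u / E\<^sub>\<infinity>\<close> one has \<open>I(u) = a \<surd>(a\<^sup>2 - 1) - arcosh a\<close>, and writing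
  \<open>a = cosh t\<close> with \<open>t > 0\<close> this is \<open>(sinh (2t) - 2t) / 2 > 0\<close>. Since
  \<open>\<Theta>\<^sub>k\<^sub>,\<^sub>H(u) = \<Theta>\<^sub>0\<^sub>,\<^sub>H(u) - k I(u)\<close> below \<open>-E\<^sub>\<infinity>\<close>, the claim follows.\<close>

lemma less_sinh_real:
  fixes x :: real
  assumes "x > 0"
  shows "x < sinh x"
proof -
  have "sinh 0 - 0 < sinh x - x"
  proof (rule DERIV_pos_imp_increasing_open[OF assms])
    fix t :: real assume "0 < t"
    hence "cosh t > 1"
      using cosh_real_nonneg_less_iff[of 0 t] by simp
    thus "\<exists>y. ((\<lambda>x. sinh x - x) has_real_derivative y) (at t) \<and> 0 < y"
      by (auto intro!: derivative_eq_intros)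
  qed (intro continuous_intros)
  thus ?thesis by simp
qed

lemma arcosh_less_mult_sqrt_real:
  fixes a :: real
  assumes "a > 1"
  shows "arcosh a < a * sqrt (a\<^sup>2 - 1)"
proof -
  define t where "t = arcosh a"
  have "t > 0" using assms by (simp add: t_def)
  hence "2 * t < sinh (2 * t)" by (intro less_sinh_real) simp
  also have "\<dots> = 2 * (sqrt (a\<^sup>2 - 1) * a)"
    using assms by (simp add: t_def sinh_double sinh_arcosh_real)
  finally show ?thesis by (simp add: t_def mult.commute)
qed

lemma E_inf_pos: "H \<ge> 2 \<Longrightarrow> E_inf H > 0"
  by (simp add: E_inf_def)

lemma I_fun_eq_arcosh:
  assumes "H \<ge> 2" and "u \<le> - E_inf H"
  defines "a \<equiv> - u / E_inf H"
  shows "I_fun H u = a * sqrt (a\<^sup>2 - 1) - arcosh a"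
proof -
  define E where "E = E_inf H"
  define s where "s = sqrt (a\<^sup>2 - 1)"
  have E: "E > 0" using E_inf_pos[OF assms(1)] by (simp add: E_def)
  have a: "a \<ge> 1" using assms(2) E by (simp add: a_def E_def[symmetric] field_simps)
  have u: "u = - E * a" using E by (simp add: a_def E_def)
  have "u\<^sup>2 - E\<^sup>2 = E\<^sup>2 * (a\<^sup>2 - 1)"
    by (simp add: u power_mult_distrib algebra_simps)
  hence sqrt_eq: "sqrt (u\<^sup>2 - E\<^sup>2) = E * s"
    using E by (simp add: s_def real_sqrt_mult)
  have "- u + E * s = E * (a + s)"
    by (simp add: u algebra_simps)
  moreover have "a + s > 0"
    using a by (simp add: s_def add_pos_nonneg)
  ultimately have ln_eq: "ln (- u + E * s) = ln E + arcosh a"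
    using E a by (simp add: ln_mult arcosh_real_def s_def)
  have prod_eq: "- (u / E\<^sup>2) * (E * s) = a * s"
    using E by (simp add: u power2_eq_square)
  show ?thesis
    unfolding s_def[symmetric] I_fun_def E_def[symmetric] sqrt_eq ln_eq prod_eq by simp
qed

lemma I_fun_pos:
  assumes "H \<ge> 2" and "u < - E_inf H"
  shows "I_fun H u > 0"
proof -
  have "- u / E_inf H > 1"
    using assms E_inf_pos[OF assms(1)] by (simp add: field_simps)
  hence "arcosh (- u / E_inf H) < - u / E_inf H * sqrt ((- u / E_inf H)\<^sup>2 - 1)"
    by (rule arcosh_less_mult_sqrt_real)
  moreover have "I_fun H u = - u / E_inf H * sqrt ((- u / E_inf H)\<^sup>2 - 1) - arcosh (- u / E_inf H)"
    using assms by (intro I_fun_eq_arcosh) simp_all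
  ultimately show ?thesis by linarith
qed

lemma Theta_eq_Theta_0_minus:
  "u \<le> - E_inf H \<Longrightarrow> Theta k H u = Theta 0 H u - real k * I_fun H u"
  by (simp add: Theta_def algebra_simps)

theorem corollary4p1:
  fixes H k :: nat and u :: real
  assumes "H \<ge> 2" and "k > 0" and "u < - E_inf H"
  shows "Theta k H u < Theta 0 H u"
proof -
  have "Theta k H u = Theta 0 H u - real k * I_fun H u"
    using assms(3) by (intro Theta_eq_Theta_0_minus) simp
  moreover have "real k * I_fun H u > 0"
    using assms I_fun_pos by simp
  ultimately show ?thesis by linarith
qed

end
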